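(* Let $a_1,\dots,a_n\in\mathbb{F}$ be pairwise non-$(\sigma,\delta)$-conjugate and $r_1,\dots,r_n\in\mathbb{Z}_+$. If $F\in\mathbb{F}[x;\sigma,\delta]$ is non-zero and $(x-a_i)^{r_i}$ divides $F$ on the right for $i=1,\dots,n$, then $$\sum_{i=1}^n r_i\le\deg(F).$$ Furthermore, equality holds if and only if $F=cF_\Omega$ with $c\in\mathbb{F}^*$, where $F_\Omega$ is the monic least left common multiple of $(x-a_1)^{r_1},\dots,(x-a_n)^{r_n}$.
   Context: Let $\mathbb{F}$ be a division ring, $\sigma$ a ring endomorphism of $\mathbb{F}$ and $\delta$ a $\sigma$-derivation; $\mathbb{F}[x;\sigma,\delta]$ is the skew polynomial ring with $xa=\sigma(a)x+\delta(a)$ (a domain with additive degree and right Euclidean division). Elements $a,b\in\mathbb{F}$ are $(\sigma,\delta)$-conjugate if $b=\sigma(\beta)a\beta^{-1}+\delta(\beta)\beta^{-1}$ for some $\beta\in\mathbb{F}^*$. *)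

theory Defs
  imports "HOL-Computational_Algebra.Polynomial"
begin

text \<open>Skew polynomial ring F[x; sigma, delta] over a division ring, represented on the
carrier of ordinary coefficient lists ('a poly): the polynomial sum_i c_i x^i (coefficients
on the left). Only the multiplication is changed, via x a = sigma(a) x + delta(a).\<close>

definition ring_endo :: "('a::division_ring \<Rightarrow> 'a) \<Rightarrow> bool" where
  "ring_endo \<sigma> \<longleftrightarrow> (\<forall>a b. \<sigma> (a + b) = \<sigma> a + \<sigma> b) \<and> (\<forall>a b. \<sigma> (a * b) = \<sigma> a * \<sigma> b) \<and> \<sigma> 1 = 1"

definition sigma_derivation :: "('a::division_ring \<Rightarrow> 'a) \<Rightarrow> ('a \<Rightarrow> 'a) \<Rightarrow> bool" where
  "sigma_derivation \<sigma> \<delta> \<longleftrightarrow> (\<forall>a b. \<delta> (a + b) = \<delta> a + \<delta> b) \<and>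
     (\<forall>a b. \<delta> (a * b) = \<sigma> a * \<delta> b + \<delta> a * b)"

definition skew_xmul :: "('a::division_ring \<Rightarrow> 'a) \<Rightarrow> ('a \<Rightarrow> 'a) \<Rightarrow> 'a poly \<Rightarrow> 'a poly" where
  "skew_xmul \<sigma> \<delta> q = pCons 0 (map_poly \<sigma> q) + map_poly \<delta> q"

definition skew_mult :: "('a::division_ring \<Rightarrow> 'a) \<Rightarrow> ('a \<Rightarrow> 'a) \<Rightarrow> 'a poly \<Rightarrow> 'a poly \<Rightarrow> 'a poly" where
  "skew_mult \<sigma> \<delta> p q = (\<Sum>i\<le>degree p. map_poly (\<lambda>c. coeff p i * c) ((skew_xmul \<sigma> \<delta> ^^ i) q))"

definition skew_pow :: "('a::division_ring \<Rightarrow> 'a) \<Rightarrow> ('a \<Rightarrow> 'a) \<Rightarrow> 'a poly \<Rightarrow> nat \<Rightarrow> 'a poly" where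
  "skew_pow \<sigma> \<delta> p n = ((\<lambda>q. skew_mult \<sigma> \<delta> p q) ^^ n) [:1:]"

definition right_dvd :: "('a::division_ring \<Rightarrow> 'a) \<Rightarrow> ('a \<Rightarrow> 'a) \<Rightarrow> 'a poly \<Rightarrow> 'a poly \<Rightarrow> bool" where
  "right_dvd \<sigma> \<delta> G F \<longleftrightarrow> (\<exists>Q. F = skew_mult \<sigma> \<delta> Q G)"

definition sd_conjugate :: "('a::division_ring \<Rightarrow> 'a) \<Rightarrow> ('a \<Rightarrow> 'a) \<Rightarrow> 'a \<Rightarrow> 'a \<Rightarrow> bool" where
  "sd_conjugate \<sigma> \<delta> a b \<longleftrightarrow>
     (\<exists>\<beta>. \<beta> \<noteq> 0 \<and> b = \<sigma> \<beta> * a * inverse \<beta> + \<delta> \<beta> * inverse \<beta>)"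

definition is_monic_llcm :: "('a::division_ring \<Rightarrow> 'a) \<Rightarrow> ('a \<Rightarrow> 'a) \<Rightarrow> nat set \<Rightarrow> (nat \<Rightarrow> 'a poly) \<Rightarrow> 'a poly \<Rightarrow> bool" where
  "is_monic_llcm \<sigma> \<delta> I P L \<longleftrightarrow> lead_coeff L = 1 \<and> (\<forall>i\<in>I. right_dvd \<sigma> \<delta> (P i) L) \<and>
     (\<forall>G. (\<forall>i\<in>I. right_dvd \<sigma> \<delta> (P i) G) \<longrightarrow> right_dvd \<sigma> \<delta> L G)"

end

theory Submission imports Defs begin

text \<open>
  Right division by a monic polynomial makes the skew polynomial ring a left principal ideal
  domain, so the common left multiples of the \<open>(x - a\<^sub>i)\<^bsup>r\<^sub>i\<^esup>\<close> are the left multiples of the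
  monic least one. Peeling a root \<open>c\<close> off \<open>F = Q (x - c)\<close>, a right factor
  \<open>(x - c\<^sub>1)\<cdots>(x - c\<^sub>s)\<close> of \<open>F\<close> with all \<open>c\<^sub>k\<close> in one conjugacy class not containing \<open>c\<close>
  turns, through the commutation rule \<open>(x - c\<^sup>e)(x - a) = (x - a\<^sup>e)(x - c)\<close> for
  \<open>e = c - a\<close> and \<open>c\<^sup>e = \<sigma>(e) c e\<^sup>-\<^sup>1 + \<delta>(e) e\<^sup>-\<^sup>1\<close>, into a
  right factor of \<open>Q\<close> of the same shape and length. Induction on the total number of factors
  gives \<open>\<Sum> r\<^sub>i \<le> deg F\<close>. Conversely the Ore-type construction of a common left multiple of
  degree at most \<open>\<Sum> r\<^sub>i\<close> bounds the degree of the least one, which therefore is exactly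
  \<open>\<Sum> r\<^sub>i\<close>; equality for \<open>F = Q F\<^sub>\<Omega>\<close> forces \<open>deg Q = 0\<close>.
\<close>

subsection \<open>The skew polynomial ring\<close>

text \<open>Left scalar multiplication; the library's \<^const>\<open>smult\<close> needs commutative coefficients.\<close>

definition lsmult :: "'a::division_ring \<Rightarrow> 'a poly \<Rightarrow> 'a poly" where
  "lsmult c q = map_poly (\<lambda>t. c * t) q"

lemma coeff_lsmult [simp]: "coeff (lsmult c q) n = c * coeff q n"
  unfolding lsmult_def by (subst coeff_map_poly) auto

lemma lsmult_add_right: "lsmult c (p + q) = lsmult c p + lsmult c q"
  by (simp add: poly_eq_iff distrib_left)

lemma lsmult_add_left: "lsmult (c + d) p = lsmult c p + lsmult d p"
  by (simp add: poly_eq_iff distrib_right)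

lemma lsmult_0_left [simp]: "lsmult 0 p = 0"
  by (simp add: poly_eq_iff)

lemma lsmult_0_right [simp]: "lsmult c 0 = 0"
  by (simp add: poly_eq_iff)

lemma lsmult_1 [simp]: "lsmult 1 p = p"
  by (simp add: poly_eq_iff)

lemma lsmult_lsmult: "lsmult c (lsmult d p) = lsmult (c * d) p"
  by (simp add: poly_eq_iff mult.assoc)

lemma lsmult_sum: "lsmult c (\<Sum>i\<in>A. f i) = (\<Sum>i\<in>A. lsmult c (f i))"
  by (simp add: poly_eq_iff coeff_sum sum_distrib_left)

lemma lsmult_pCons_0: "lsmult c (pCons 0 q) = pCons 0 (lsmult c q)"
  by (simp add: poly_eq_iff coeff_pCons split: nat.split)

lemma degree_lsmult_le: "degree (lsmult c p) \<le> degree p"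
  by (rule degree_le) (simp add: coeff_eq_0)

lemma degree_lsmult: "c \<noteq> 0 \<Longrightarrow> degree (lsmult c q) = degree q"
  by (metis coeff_lsmult degree_lsmult_le le_antisym le_degree leading_coeff_0_iff
      mult_eq_0_iff)

lemma skew_mult_lsmult:
  "skew_mult \<sigma> \<delta> p q = (\<Sum>i\<le>degree p. lsmult (coeff p i) ((skew_xmul \<sigma> \<delta> ^^ i) q))"
  by (simp add: skew_mult_def lsmult_def)

lemma degree_diff_less_same_lead:
  fixes p q :: "'a::ring poly"
  assumes "degree p = degree q" "lead_coeff p = lead_coeff q" "p \<noteq> q"
  shows "degree (p - q) < degree p"
proof -
  have "degree (p - q) \<le> degree p"
    using assms(1) degree_diff_le[of p "degree p" q] by simp
  moreover have "coeff (p - q) (degree p) = 0" "p - q \<noteq> 0"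
    using assms by simp_all
  ultimately show ?thesis
    by (metis le_neq_implies_less leading_coeff_0_iff)
qed

locale skew_poly_ring =
  fixes \<sigma> \<delta> :: "'a::division_ring \<Rightarrow> 'a"
  assumes ring_endo: "ring_endo \<sigma>" and sigma_derivation: "sigma_derivation \<sigma> \<delta>"
begin

lemma sigma_add: "\<sigma> (a + b) = \<sigma> a + \<sigma> b"
  and sigma_mult: "\<sigma> (a * b) = \<sigma> a * \<sigma> b"
  and sigma_1 [simp]: "\<sigma> 1 = 1"
  using ring_endo by (simp_all add: ring_endo_def)

lemma delta_add: "\<delta> (a + b) = \<delta> a + \<delta> b"
  and delta_mult: "\<delta> (a * b) = \<sigma> a * \<delta> b + \<delta> a * b"
  using sigma_derivation by (simp_all add: sigma_derivation_def)

lemma sigma_0 [simp]: "\<sigma> 0 = 0"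
  using sigma_add[of 0 0] by simp

lemma delta_0 [simp]: "\<delta> 0 = 0"
  using delta_add[of 0 0] by simp

lemma delta_1 [simp]: "\<delta> 1 = 0"
  using delta_mult[of 1 1] by simp

lemma sigma_nonzero: "a \<noteq> 0 \<Longrightarrow> \<sigma> a \<noteq> 0"
  by (metis left_inverse mult_zero_right sigma_1 sigma_mult zero_neq_one)

lemma funpow_sigma_nonzero: "a \<noteq> 0 \<Longrightarrow> (\<sigma> ^^ k) a \<noteq> 0"
  by (induct k) (auto simp: sigma_nonzero)

lemma funpow_sigma_1: "(\<sigma> ^^ k) 1 = 1"
  by (induct k) auto

abbreviation skew_times (infixl "\<star>" 70) where "p \<star> q \<equiv> skew_mult \<sigma> \<delta> p q"
abbreviation xmul where "xmul \<equiv> skew_xmul \<sigma> \<delta>"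
abbreviation lin :: "'a \<Rightarrow> 'a poly" where "lin c \<equiv> [:- c, 1:]"
abbreviation rdvd where "rdvd G F \<equiv> right_dvd \<sigma> \<delta> G F"
abbreviation conjugate where "conjugate a b \<equiv> sd_conjugate \<sigma> \<delta> a b"

lemma coeff_xmul_0: "coeff (xmul q) 0 = \<delta> (coeff q 0)"
  and coeff_xmul_Suc: "coeff (xmul q) (Suc n) = \<sigma> (coeff q n) + \<delta> (coeff q (Suc n))"
  by (simp_all add: skew_xmul_def coeff_map_poly)

lemma xmul_0 [simp]: "xmul 0 = 0"
  by (simp add: skew_xmul_def)

lemma xmul_add: "xmul (p + q) = xmul p + xmul q"
proof -
  have "coeff (xmul (p + q)) n = coeff (xmul p + xmul q) n" for n
    by (cases n) (simp_all add: coeff_xmul_0 coeff_xmul_Suc sigma_add delta_add)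
  then show ?thesis
    by (simp add: poly_eq_iff)
qed

lemma xmul_lsmult: "xmul (lsmult c q) = lsmult (\<sigma> c) (xmul q) + lsmult (\<delta> c) q"
proof -
  have "coeff (xmul (lsmult c q)) n = coeff (lsmult (\<sigma> c) (xmul q) + lsmult (\<delta> c) q) n" for n
    by (cases n) (simp_all add: coeff_xmul_0 coeff_xmul_Suc sigma_mult delta_mult sigma_add
        distrib_left algebra_simps)
  then show ?thesis
    by (simp add: poly_eq_iff)
qed

lemma xmul_pCons: "xmul (pCons c q) = pCons (\<delta> c) ([:\<sigma> c:] + xmul q)"
  by (simp add: poly_eq_iff coeff_xmul_0 coeff_xmul_Suc coeff_pCons split: nat.split)

lemma xmul_pCons_0: "xmul (pCons 0 q) = pCons 0 (xmul q)"
  by (simp add: xmul_pCons)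

lemma degree_xmul:
  assumes "q \<noteq> 0"
  shows "degree (xmul q) = Suc (degree q)"
    and "coeff (xmul q) (Suc (degree q)) = \<sigma> (lead_coeff q)"
proof -
  show top: "coeff (xmul q) (Suc (degree q)) = \<sigma> (lead_coeff q)"
    by (simp add: coeff_xmul_Suc coeff_eq_0)
  have "coeff (xmul q) n = 0" if "Suc (degree q) < n" for n
    using that by (cases n) (simp_all add: coeff_xmul_Suc coeff_eq_0)
  then have "degree (xmul q) \<le> Suc (degree q)"
    by (simp add: degree_le)
  moreover have "Suc (degree q) \<le> degree (xmul q)"
    using top assms by (simp add: le_degree sigma_nonzero)
  ultimately show "degree (xmul q) = Suc (degree q)"
    by simp
qed

lemma skew_mult_eq_sum:
  "degree p \<le> N \<Longrightarrow> p \<star> q = (\<Sum>i\<le>N. lsmult (coeff p i) ((xmul ^^ i) q))"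
  unfolding skew_mult_lsmult by (rule sum.mono_neutral_left) (auto simp: coeff_eq_0)

lemma skew_mult_pCons_left: "pCons c p \<star> q = lsmult c q + p \<star> xmul q"
proof -
  have "pCons c p \<star> q = (\<Sum>i\<le>Suc (degree p). lsmult (coeff (pCons c p) i) ((xmul ^^ i) q))"
    by (rule skew_mult_eq_sum) simp
  also have "\<dots> = lsmult c q + (\<Sum>i\<le>degree p. lsmult (coeff p i) ((xmul ^^ i) (xmul q)))"
    by (subst sum.atMost_Suc_shift) (simp add: funpow_Suc_right del: funpow.simps)
  finally show ?thesis
    by (simp add: skew_mult_lsmult)
qed

lemma skew_mult_0_left [simp]: "0 \<star> q = 0"
  by (simp add: skew_mult_lsmult)

lemma skew_mult_0_right [simp]: "p \<star> 0 = 0"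
  by (induct p) (auto simp: skew_mult_pCons_left)

lemma skew_mult_const_left: "[:c:] \<star> q = lsmult c q"
  using skew_mult_pCons_left[of c 0 q] by simp

lemma skew_mult_1_left [simp]: "[:1:] \<star> q = q"
  by (simp add: skew_mult_const_left)

lemma skew_mult_add_right: "p \<star> (q + r) = p \<star> q + p \<star> r"
  by (induct p arbitrary: q r) (simp_all add: skew_mult_pCons_left xmul_add lsmult_add_right)

lemma skew_mult_add_left: "(p + p') \<star> q = p \<star> q + p' \<star> q"
proof -
  let ?N = "max (degree p) (degree p')"
  have "(p + p') \<star> q = (\<Sum>i\<le>?N. lsmult (coeff (p + p') i) ((xmul ^^ i) q))"
    by (rule skew_mult_eq_sum) (simp add: degree_add_le)
  also have "\<dots> = (\<Sum>i\<le>?N. lsmult (coeff p i) ((xmul ^^ i) q))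
                + (\<Sum>i\<le>?N. lsmult (coeff p' i) ((xmul ^^ i) q))"
    by (simp add: lsmult_add_left sum.distrib)
  finally show ?thesis
    by (simp add: skew_mult_eq_sum[symmetric])
qed

lemma skew_mult_diff_left: "(p - p') \<star> q = p \<star> q - p' \<star> q"
  by (metis add_diff_cancel_right' diff_add_cancel skew_mult_add_left)

lemma skew_mult_lsmult_left: "lsmult c p \<star> q = lsmult c (p \<star> q)"
proof -
  have "lsmult c p \<star> q = (\<Sum>i\<le>degree p. lsmult (coeff (lsmult c p) i) ((xmul ^^ i) q))"
    by (rule skew_mult_eq_sum) (rule degree_lsmult_le)
  also have "\<dots> = lsmult c (p \<star> q)"
    by (simp add: skew_mult_lsmult lsmult_sum lsmult_lsmult)
  finally show ?thesis .
qed

lemma skew_mult_xmul_left: "xmul q \<star> r = xmul (q \<star> r)"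
proof (induct q arbitrary: r)
  case (pCons c q)
  have "xmul (pCons c q) \<star> r = lsmult (\<delta> c) r + ([:\<sigma> c:] + xmul q) \<star> xmul r"
    by (simp add: xmul_pCons skew_mult_pCons_left)
  also have "\<dots> = lsmult (\<delta> c) r + lsmult (\<sigma> c) (xmul r) + xmul (q \<star> xmul r)"
    by (simp add: skew_mult_add_left skew_mult_const_left pCons add.assoc)
  also have "\<dots> = xmul (pCons c q \<star> r)"
    by (simp add: skew_mult_pCons_left xmul_add xmul_lsmult algebra_simps)
  finally show ?case .
qed simp

lemma skew_mult_assoc: "(p \<star> q) \<star> r = p \<star> (q \<star> r)"
  by (induct p arbitrary: q)
    (simp_all add: skew_mult_pCons_left skew_mult_add_left skew_mult_lsmult_left
      skew_mult_xmul_left)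

lemma skew_mult_pCons_0_right: "p \<star> pCons 0 q = pCons 0 (p \<star> q)"
  by (induct p arbitrary: q) (simp_all add: skew_mult_pCons_left xmul_pCons_0 lsmult_pCons_0)

lemma skew_mult_1_right [simp]: "p \<star> [:1:] = p"
proof (induct p)
  case (pCons c p)
  have "xmul [:1:] = pCons 0 [:1:]" "lsmult c [:1:] = [:c:]"
    by (simp_all add: xmul_pCons poly_eq_iff coeff_pCons split: nat.split)
  then show ?case
    by (simp add: skew_mult_pCons_left skew_mult_pCons_0_right pCons)
qed simp

lemma degree_coeff_skew_mult:
  "p \<noteq> 0 \<Longrightarrow> q \<noteq> 0 \<Longrightarrow> degree (p \<star> q) = degree p + degree q \<and>
    coeff (p \<star> q) (degree p + degree q) = lead_coeff p * (\<sigma> ^^ degree p) (lead_coeff q)"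
proof (induct p arbitrary: q)
  case (pCons c p)
  show ?case
  proof (cases "p = 0")
    case True
    then show ?thesis
      using pCons by (simp add: skew_mult_pCons_left degree_lsmult)
  next
    case False
    have "xmul q \<noteq> 0"
      using degree_xmul(1)[OF pCons(4)] by auto
    from pCons(2)[OF False this] degree_xmul[OF pCons(4)]
    have IH: "degree (p \<star> xmul q) = degree p + Suc (degree q)"
      "coeff (p \<star> xmul q) (degree p + Suc (degree q))
         = lead_coeff p * (\<sigma> ^^ degree p) (\<sigma> (lead_coeff q))"
      by auto
    have less: "degree (lsmult c q) < degree (p \<star> xmul q)"
      using IH(1) degree_lsmult_le[of c q] by simp
    then have "degree (pCons c p \<star> q) = degree (p \<star> xmul q)"
      by (simp add: skew_mult_pCons_left degree_add_eq_right)
    moreover have "coeff (pCons c p \<star> q) (degree p + Suc (degree q))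
        = coeff (p \<star> xmul q) (degree p + Suc (degree q))"
      using less IH(1) by (simp add: skew_mult_pCons_left coeff_eq_0)
    ultimately show ?thesis
      using IH False by (simp add: funpow_Suc_right del: funpow.simps)
  qed
qed simp

lemma degree_skew_mult: "p \<noteq> 0 \<Longrightarrow> q \<noteq> 0 \<Longrightarrow> degree (p \<star> q) = degree p + degree q"
  using degree_coeff_skew_mult by blast

lemma skew_mult_eq_0_iff: "p \<star> q = 0 \<longleftrightarrow> p = 0 \<or> q = 0"
proof (cases "p = 0 \<or> q = 0")
  case False
  then have "coeff (p \<star> q) (degree p + degree q) \<noteq> 0"
    using degree_coeff_skew_mult[of p q] funpow_sigma_nonzero[of "lead_coeff q" "degree p"]
    by auto
  with False show ?thesis
    by auto
qed auto

lemma lead_coeff_skew_mult_monic: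
  "lead_coeff q = 1 \<Longrightarrow> p \<noteq> 0 \<Longrightarrow> lead_coeff (p \<star> q) = lead_coeff p"
  using degree_coeff_skew_mult[of p q] funpow_sigma_1 by (cases "q = 0") auto

lemma skew_mult_cancel_right: "A \<star> C = B \<star> C \<Longrightarrow> C \<noteq> 0 \<Longrightarrow> A = B"
  using skew_mult_diff_left[of A B C] skew_mult_eq_0_iff[of "A - B" C] by simp

lemma right_dvd_mult_self: "rdvd P (Q \<star> P)"
  by (auto simp: right_dvd_def)

lemma right_dvd_1: "rdvd [:1:] F"
  by (metis right_dvd_def skew_mult_1_right)

lemma right_dvd_trans: "rdvd P G \<Longrightarrow> rdvd G F \<Longrightarrow> rdvd P F"
  by (metis right_dvd_def skew_mult_assoc)

lemma skew_pow_0: "skew_pow \<sigma> \<delta> p 0 = [:1:]"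
  and skew_pow_Suc: "skew_pow \<sigma> \<delta> p (Suc n) = p \<star> skew_pow \<sigma> \<delta> p n"
  by (simp_all add: skew_pow_def)

lemma skew_pow_Suc': "skew_pow \<sigma> \<delta> p (Suc n) = skew_pow \<sigma> \<delta> p n \<star> p"
  by (induct n) (simp_all add: skew_pow_0 skew_pow_Suc skew_mult_assoc[symmetric])

subsection \<open>Right division by monic polynomials\<close>

lemma right_div_monic:
  assumes monic: "lead_coeff L = 1"
  obtains Q R where "G = Q \<star> L + R" "R = 0 \<or> degree R < degree L"
proof (induct G arbitrary: thesis rule: measure_induct_rule[where f = degree])
  case (less G)
  show ?case
  proof (cases "G = 0 \<or> degree G < degree L")
    case True
    then show ?thesis
      by (intro less(2)[of 0 G]) auto
  next
    case False
    define T where "T = monom (lead_coeff G) (degree G - degree L)"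
    have "T \<noteq> 0" "L \<noteq> 0"
      using False monic by (auto simp: T_def)
    then have "degree (T \<star> L) = degree G"
      using False by (simp add: degree_skew_mult T_def degree_monom_eq)
    have "lead_coeff (T \<star> L) = lead_coeff G"
      using lead_coeff_skew_mult_monic[OF monic \<open>T \<noteq> 0\<close>] False
      by (simp add: T_def degree_monom_eq)
    show ?thesis
    proof (cases "G = T \<star> L")
      case True
      then show ?thesis
        by (intro less(2)[of T 0]) auto
    next
      case False
      with \<open>degree (T \<star> L) = _\<close> \<open>lead_coeff (T \<star> L) = _\<close>
      have "degree (G - T \<star> L) < degree G"
        by (intro degree_diff_less_same_lead) auto
      then obtain Q R where "G - T \<star> L = Q \<star> L + R" "R = 0 \<or> degree R < degree L"
        by (rule less(1))
      then show ?thesis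
        by (intro less(2)[of "T + Q" R]) (simp_all add: skew_mult_add_left algebra_simps)
    qed
  qed
qed

lemma right_div_lin:
  obtains W k where "Q = W \<star> lin c + [:k:]"
proof -
  obtain W R where "Q = W \<star> lin c + R" "R = 0 \<or> degree R < 1"
    using right_div_monic[of "lin c" Q] by auto
  moreover from this(2) have "degree R = 0"
    by auto
  then obtain k where "R = [:k:]"
    by (elim degree_eq_zeroE)
  ultimately show thesis
    using that[of W k] by simp
qed

subsection \<open>Conjugation and linear factors\<close>

definition conj_by :: "'a \<Rightarrow> 'a \<Rightarrow> 'a" where
  "conj_by e c = \<sigma> e * c * inverse e + \<delta> e * inverse e"

lemma sd_conjugate_iff: "conjugate a b \<longleftrightarrow> (\<exists>\<beta>. \<beta> \<noteq> 0 \<and> b = conj_by \<beta> a)"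
  by (simp add: sd_conjugate_def conj_by_def)

lemma sd_conjugate_conj_by: "e \<noteq> 0 \<Longrightarrow> conjugate c (conj_by e c)"
  by (auto simp: sd_conjugate_iff)

lemma conj_by_1: "conj_by 1 a = a"
  by (simp add: conj_by_def)

lemma conj_by_conj_by:
  assumes "\<beta> \<noteq> 0" "\<gamma> \<noteq> 0"
  shows "conj_by \<gamma> (conj_by \<beta> a) = conj_by (\<gamma> * \<beta>) a"
proof -
  have "conj_by (\<gamma> * \<beta>) a = \<sigma> \<gamma> * \<sigma> \<beta> * a * (inverse \<beta> * inverse \<gamma>)
      + (\<sigma> \<gamma> * \<delta> \<beta> + \<delta> \<gamma> * \<beta>) * (inverse \<beta> * inverse \<gamma>)"
    using assms by (simp add: conj_by_def sigma_mult delta_mult nonzero_inverse_mult_distrib)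
  also have "\<dots> = \<sigma> \<gamma> * (\<sigma> \<beta> * a * inverse \<beta>) * inverse \<gamma>
      + \<sigma> \<gamma> * (\<delta> \<beta> * inverse \<beta>) * inverse \<gamma> + \<delta> \<gamma> * (\<beta> * inverse \<beta>) * inverse \<gamma>"
    by (simp add: algebra_simps)
  also have "\<dots> = conj_by \<gamma> (conj_by \<beta> a)"
    using assms by (simp add: conj_by_def algebra_simps)
  finally show ?thesis
    by simp
qed

lemma sd_conjugate_refl: "conjugate a a"
  by (metis conj_by_1 sd_conjugate_iff zero_neq_one)

lemma sd_conjugate_trans: "conjugate a b \<Longrightarrow> conjugate b c \<Longrightarrow> conjugate a c"
  unfolding sd_conjugate_iff by (metis conj_by_conj_by no_zero_divisors)

lemma sd_conjugate_sym:
  assumes "conjugate a b"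
  shows "conjugate b a"
proof -
  obtain \<beta> where "\<beta> \<noteq> 0" "b = conj_by \<beta> a"
    using assms by (auto simp: sd_conjugate_iff)
  then have "conj_by (inverse \<beta>) b = a"
    by (simp add: conj_by_conj_by conj_by_1)
  with \<open>\<beta> \<noteq> 0\<close> show ?thesis
    by (metis inverse_nonzero_iff_nonzero sd_conjugate_conj_by)
qed

lemma lin_conj_by_mult_const:
  assumes "e \<noteq> 0"
  shows "lin (conj_by e c) \<star> [:e:] = [:\<sigma> e:] \<star> lin c"
proof -
  have "conj_by e c * e = \<sigma> e * c + \<delta> e"
    using assms by (simp add: conj_by_def distrib_right mult.assoc)
  then have "lin (conj_by e c) \<star> [:e:] = [:\<sigma> e * (- c), \<sigma> e:]"
    by (simp add: skew_mult_pCons_left xmul_pCons poly_eq_iff coeff_pCons split: nat.split)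
  also have "\<dots> = [:\<sigma> e:] \<star> lin c"
    by (simp add: skew_mult_const_left poly_eq_iff coeff_pCons split: nat.split)
  finally show ?thesis .
qed

lemma lin_mult_lin_swap:
  assumes "c \<noteq> a"
  shows "lin (conj_by (c - a) c) \<star> lin a = lin (conj_by (c - a) a) \<star> lin c"
proof -
  define e where "e = c - a"
  have "e \<noteq> 0"
    using assms by (simp add: e_def)
  have "lin (conj_by e c) \<star> lin a = lin (conj_by e c) \<star> lin c + lin (conj_by e c) \<star> [:e:]"
    by (simp add: e_def skew_mult_add_right[symmetric])
  also have "\<dots> = (lin (conj_by e c) + [:\<sigma> e:]) \<star> lin c"
    by (simp only: lin_conj_by_mult_const[OF \<open>e \<noteq> 0\<close>] skew_mult_add_left)
  also have "lin (conj_by e c) + [:\<sigma> e:] = lin (conj_by e a)"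
  proof -
    have "c * inverse e = (e + a) * inverse e"
      by (simp add: e_def)
    also have "\<dots> = 1 + a * inverse e"
      using \<open>e \<noteq> 0\<close> by (simp add: distrib_right)
    finally have "c * inverse e = 1 + a * inverse e" .
    then show ?thesis
      by (simp add: conj_by_def mult.assoc distrib_left)
  qed
  finally show ?thesis
    by (simp add: e_def)
qed

lemma lin_right_dvd_mult_lin:
  assumes "c \<noteq> a" "rdvd (lin c) (Q \<star> lin a)"
  shows "rdvd (lin (conj_by (c - a) c)) Q"
proof -
  define e where "e = c - a"
  have "e \<noteq> 0"
    using assms by (simp add: e_def)
  obtain W k where Q: "Q = W \<star> lin (conj_by e c) + [:k:]"
    using right_div_lin by blast
  obtain T where T: "Q \<star> lin a = T \<star> lin c"
    using assms(2) by (auto simp: right_dvd_def)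
  have "Q \<star> lin a = W \<star> (lin (conj_by e c) \<star> lin a) + [:k:] \<star> (lin c + [:e:])"
    by (simp add: Q skew_mult_add_left skew_mult_assoc e_def)
  also have "\<dots> = (W \<star> lin (conj_by e a) + [:k:]) \<star> lin c + [:k:] \<star> [:e:]"
    using lin_mult_lin_swap[OF assms(1)]
    by (simp only: e_def skew_mult_assoc skew_mult_add_right skew_mult_add_left add.assoc)
  also have "[:k:] \<star> [:e:] = [:k * e:]"
    by (simp add: skew_mult_const_left poly_eq_iff coeff_pCons split: nat.split)
  finally have D: "(T - (W \<star> lin (conj_by e a) + [:k:])) \<star> lin c = [:k * e:]"
    using T by (simp add: skew_mult_diff_left algebra_simps)
  have "k * e = 0"
  proof (rule ccontr)
    assume "k * e \<noteq> 0"
    with D have "T - (W \<star> lin (conj_by e a) + [:k:]) \<noteq> 0"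
      by auto
    then have "degree [:k * e:] \<ge> 1"
      by (simp flip: D add: degree_skew_mult)
    then show False
      by simp
  qed
  with \<open>e \<noteq> 0\<close> have "k = 0"
    by simp
  then show ?thesis
    by (simp add: Q e_def right_dvd_mult_self)
qed

subsection \<open>Products of linear factors from one conjugacy class\<close>

inductive conj_lin_prod :: "'a \<Rightarrow> nat \<Rightarrow> 'a poly \<Rightarrow> bool" where
  one: "conj_lin_prod b 0 [:1:]"
| snoc: "conj_lin_prod b s P \<Longrightarrow> conjugate b c \<Longrightarrow> conj_lin_prod b (Suc s) (P \<star> lin c)"

lemma conj_lin_prod_skew_pow: "conj_lin_prod a r (skew_pow \<sigma> \<delta> (lin a) r)"
  by (induct r) (auto simp: skew_pow_0 skew_pow_Suc' intro: conj_lin_prod.intros sd_conjugate_refl)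

text \<open>Moving \<open>x - a\<close> to the left through every factor by the commutation rule keeps each root
  in its conjugacy class, while the root of \<open>x - a\<close> stays outside the class of \<open>b\<close>.\<close>

lemma conj_lin_prod_right_dvd_cancel_lin:
  assumes "conj_lin_prod b s P" "rdvd P (Q \<star> lin a)" "\<not> conjugate b a"
  shows "\<exists>P'. conj_lin_prod b s P' \<and> rdvd P' Q"
  using assms
proof (induct arbitrary: Q a rule: conj_lin_prod.induct)
  case (one b)
  then show ?case
    by (auto simp: right_dvd_def intro: conj_lin_prod.one)
next
  case (snoc b s P c)
  obtain T where T: "Q \<star> lin a = T \<star> (P \<star> lin c)"
    using snoc(4) by (auto simp: right_dvd_def)
  have "c \<noteq> a"
    using snoc(3,5) by auto
  define e where "e = c - a"
  have "e \<noteq> 0"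
    using \<open>c \<noteq> a\<close> by (simp add: e_def)
  have "rdvd (lin c) (Q \<star> lin a)"
    by (simp add: T skew_mult_assoc[symmetric] right_dvd_mult_self)
  then obtain W where W: "Q = W \<star> lin (conj_by e c)"
    using lin_right_dvd_mult_lin[OF \<open>c \<noteq> a\<close>] by (auto simp: right_dvd_def e_def)
  have "(W \<star> lin (conj_by e a)) \<star> lin c = (T \<star> P) \<star> lin c"
    using T W lin_mult_lin_swap[OF \<open>c \<noteq> a\<close>] by (simp add: skew_mult_assoc e_def)
  then have "rdvd P (W \<star> lin (conj_by e a))"
    by (auto simp: right_dvd_def dest: skew_mult_cancel_right)
  moreover have "\<not> conjugate b (conj_by e a)"
    using snoc(5) sd_conjugate_conj_by[OF \<open>e \<noteq> 0\<close>] sd_conjugate_sym sd_conjugate_trans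
    by blast
  ultimately obtain P1 where P1: "conj_lin_prod b s P1" "rdvd P1 W"
    using snoc(2) by blast
  have "conjugate b (conj_by e c)"
    using snoc(3) sd_conjugate_conj_by[OF \<open>e \<noteq> 0\<close>] sd_conjugate_trans by blast
  with P1(1) have "conj_lin_prod b (Suc s) (P1 \<star> lin (conj_by e c))"
    by (rule conj_lin_prod.snoc)
  moreover have "rdvd (P1 \<star> lin (conj_by e c)) Q"
    using P1(2) W by (auto simp: right_dvd_def skew_mult_assoc)
  ultimately show ?case
    by blast
qed

lemma conj_lin_prods_sum_le_degree:
  assumes "finite I"
    and "\<forall>i\<in>I. \<forall>j\<in>I. i \<noteq> j \<longrightarrow> \<not> conjugate (b i) (b j)"
    and "\<forall>i\<in>I. conj_lin_prod (b i) (s i) (P i) \<and> rdvd (P i) F"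
    and "F \<noteq> 0"
  shows "sum s I \<le> degree F"
  using assms(3,4)
proof (induction "sum s I" arbitrary: s P F)
  case (Suc m)
  obtain j where j: "j \<in> I" "s j \<noteq> 0"
    using Suc.hyps(2) by (metis sum.neutral nat.distinct(1))
  then obtain t where t: "s j = Suc t"
    using not0_implies_Suc by blast
  with j Suc.prems(1) have "conj_lin_prod (b j) (Suc t) (P j)"
    by auto
  then obtain P0 c where P0: "P j = P0 \<star> lin c" "conj_lin_prod (b j) t P0" "conjugate (b j) c"
    by (cases rule: conj_lin_prod.cases) auto
  obtain T where "F = T \<star> P j"
    using Suc.prems(1) j by (auto simp: right_dvd_def)
  define Q where "Q = T \<star> P0"
  have F: "F = Q \<star> lin c"
    by (simp add: \<open>F = T \<star> P j\<close> P0(1) Q_def skew_mult_assoc)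
  with Suc.prems(2) have "Q \<noteq> 0"
    by auto
  have "\<exists>P'. conj_lin_prod (b i) (s i) P' \<and> rdvd P' Q" if i: "i \<in> I - {j}" for i
  proof -
    have "\<not> conjugate (b i) c"
      using assms(2) i j P0(3) sd_conjugate_sym sd_conjugate_trans by blast
    then show ?thesis
      using Suc.prems(1) i F conj_lin_prod_right_dvd_cancel_lin by auto
  qed
  then obtain P' where P': "\<forall>i\<in>I - {j}. conj_lin_prod (b i) (s i) (P' i) \<and> rdvd (P' i) Q"
    by metis
  have "m = sum (s(j := t)) I"
    using Suc.hyps(2) assms(1) j t by (simp add: sum.remove)
  moreover have "\<forall>i\<in>I. conj_lin_prod (b i) ((s(j := t)) i) ((P'(j := P0)) i)
                    \<and> rdvd ((P'(j := P0)) i) Q"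
    using P' P0(2) by (auto simp: Q_def right_dvd_mult_self)
  ultimately have "m \<le> degree Q"
    using Suc.hyps(1) \<open>Q \<noteq> 0\<close> by blast
  then show ?case
    using Suc.hyps(2) F \<open>Q \<noteq> 0\<close> by (simp add: degree_skew_mult)
qed simp

subsection \<open>Common left multiples\<close>

lemma left_multiple_lin: "\<exists>w. w \<noteq> 0 \<and> degree w \<le> 1 \<and> rdvd (lin b) (w \<star> f)"
proof -
  obtain q k where qk: "f = q \<star> lin b + [:k:]"
    using right_div_lin by blast
  show ?thesis
  proof (cases "k = 0")
    case True
    then show ?thesis
      using qk by (intro exI[of _ "[:1:]"]) (simp add: right_dvd_mult_self)
  next
    case False
    define w where "w = lin (conj_by k b)"
    have "w \<star> f = (w \<star> q + [:\<sigma> k:]) \<star> lin b"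
      by (simp only: qk skew_mult_add_right skew_mult_add_left skew_mult_assoc w_def
          lin_conj_by_mult_const[OF False])
    then show ?thesis
      by (intro exI[of _ w]) (simp add: w_def right_dvd_mult_self)
  qed
qed

lemma left_multiple_skew_pow:
  "\<exists>u. u \<noteq> 0 \<and> degree u \<le> r \<and> rdvd (skew_pow \<sigma> \<delta> (lin b) r) (u \<star> f)"
proof (induct r)
  case 0
  show ?case
    by (intro exI[of _ "[:1:]"]) (simp add: skew_pow_0 right_dvd_1)
next
  case (Suc r)
  then obtain u v where u: "u \<noteq> 0" "degree u \<le> r" "u \<star> f = v \<star> skew_pow \<sigma> \<delta> (lin b) r"
    by (auto simp: right_dvd_def)
  obtain w t where w: "w \<noteq> 0" "degree w \<le> 1" "w \<star> v = t \<star> lin b"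
    using left_multiple_lin[of b v] by (auto simp: right_dvd_def)
  have "(w \<star> u) \<star> f = t \<star> skew_pow \<sigma> \<delta> (lin b) (Suc r)"
    by (simp add: skew_mult_assoc u(3) skew_pow_Suc) (simp add: skew_mult_assoc[symmetric] w(3))
  moreover have "w \<star> u \<noteq> 0" "degree (w \<star> u) \<le> Suc r"
    using w u by (simp_all add: skew_mult_eq_0_iff degree_skew_mult)
  ultimately show ?case
    by (auto simp: right_dvd_def)
qed

lemma common_left_multiple_skew_pows:
  assumes "finite I"
  shows "\<exists>m. m \<noteq> 0 \<and> degree m \<le> (\<Sum>i\<in>I. r i) \<and>
    (\<forall>i\<in>I. rdvd (skew_pow \<sigma> \<delta> (lin (a i)) (r i)) m)"
  using assms
proof (induct I rule: finite_induct)
  case empty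
  show ?case
    by (intro exI[of _ "[:1:]"]) simp
next
  case (insert j I)
  then obtain m where m: "m \<noteq> 0" "degree m \<le> (\<Sum>i\<in>I. r i)"
    "\<forall>i\<in>I. rdvd (skew_pow \<sigma> \<delta> (lin (a i)) (r i)) m"
    by blast
  obtain u where u: "u \<noteq> 0" "degree u \<le> r j" "rdvd (skew_pow \<sigma> \<delta> (lin (a j)) (r j)) (u \<star> m)"
    using left_multiple_skew_pow by blast
  have "u \<star> m \<noteq> 0" "degree (u \<star> m) \<le> (\<Sum>i\<in>insert j I. r i)"
    using u m insert(1,2) by (simp_all add: skew_mult_eq_0_iff degree_skew_mult)
  moreover have "\<forall>i\<in>I. rdvd (skew_pow \<sigma> \<delta> (lin (a i)) (r i)) (u \<star> m)"
    using m(3) right_dvd_mult_self right_dvd_trans by blast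
  ultimately show ?case
    using u(3) by blast
qed

text \<open>A non-zero common left multiple of least degree, made monic, is the least left common
  multiple: the remainder of any other common left multiple is again one, of smaller degree.\<close>

lemma monic_llcm_exists:
  assumes "\<exists>m. m \<noteq> 0 \<and> (\<forall>i\<in>I. rdvd (P i) m)"
  shows "\<exists>L. is_monic_llcm \<sigma> \<delta> I P L"
proof -
  let ?common = "\<lambda>m. m \<noteq> 0 \<and> (\<forall>i\<in>I. rdvd (P i) m)"
  obtain M where M: "?common M" "\<And>m. ?common m \<Longrightarrow> degree M \<le> degree m"
    using assms ex_has_least_nat[of ?common _ degree] by blast
  define L where "L = [:inverse (lead_coeff M):] \<star> M"
  have "degree L = degree M"
    using M(1) by (simp add: L_def skew_mult_const_left degree_lsmult)
  then have monic: "lead_coeff L = 1"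
    using M(1) by (simp add: L_def skew_mult_const_left)
  have dvd: "\<forall>i\<in>I. rdvd (P i) L"
    using M(1) right_dvd_mult_self right_dvd_trans unfolding L_def by blast
  have "rdvd L G" if G: "\<forall>i\<in>I. rdvd (P i) G" for G
  proof -
    obtain Q R where QR: "G = Q \<star> L + R" "R = 0 \<or> degree R < degree L"
      using right_div_monic[OF monic] by blast
    have "rdvd (P i) R" if "i \<in> I" for i
    proof -
      obtain A B where "G = A \<star> P i" "L = B \<star> P i"
        using G dvd \<open>i \<in> I\<close> unfolding right_dvd_def by meson
      then have "R = (A - Q \<star> B) \<star> P i"
        using QR(1) by (simp add: skew_mult_diff_left skew_mult_assoc algebra_simps)
      then show ?thesis
        by (simp add: right_dvd_mult_self)
    qed
    then have "R = 0"
      using M(2)[of R] QR(2) \<open>degree L = degree M\<close> by force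
    then show ?thesis
      using QR(1) by (simp add: right_dvd_mult_self)
  qed
  with monic dvd show ?thesis
    by (auto simp: is_monic_llcm_def)
qed

lemma degree_eq_monic_llcm_iff:
  assumes "is_monic_llcm \<sigma> \<delta> I P L" "F \<noteq> 0" "\<forall>i\<in>I. rdvd (P i) F"
  shows "degree F = degree L \<longleftrightarrow> (\<exists>c. c \<noteq> 0 \<and> F = [:c:] \<star> L)"
proof -
  have "L \<noteq> 0"
    using assms(1) by (auto simp: is_monic_llcm_def)
  have "rdvd L F"
    using assms(1,3) by (simp add: is_monic_llcm_def)
  then obtain Q where Q: "F = Q \<star> L"
    by (auto simp: right_dvd_def)
  with assms(2) have "Q \<noteq> 0"
    by auto
  have "degree F = degree L \<longleftrightarrow> degree Q = 0"
    using Q \<open>Q \<noteq> 0\<close> \<open>L \<noteq> 0\<close> by (simp add: degree_skew_mult)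
  also have "\<dots> \<longleftrightarrow> (\<exists>c. c \<noteq> 0 \<and> F = [:c:] \<star> L)"
  proof
    assume "degree Q = 0"
    then obtain c where "Q = [:c:]"
      by (elim degree_eq_zeroE)
    with Q \<open>Q \<noteq> 0\<close> show "\<exists>c. c \<noteq> 0 \<and> F = [:c:] \<star> L"
      by auto
  next
    assume "\<exists>c. c \<noteq> 0 \<and> F = [:c:] \<star> L"
    then obtain c where "F = [:c:] \<star> L"
      by blast
    with Q \<open>L \<noteq> 0\<close> have "Q = [:c:]"
      using skew_mult_cancel_right by blast
    then show "degree Q = 0"
      by simp
  qed
  finally show ?thesis .
qed

lemma sum_le_degree_common_left_multiple:
  assumes "finite I" "\<forall>i\<in>I. \<forall>j\<in>I. i \<noteq> j \<longrightarrow> \<not> conjugate (a i) (a j)"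
    and "F \<noteq> 0" "\<forall>i\<in>I. rdvd (skew_pow \<sigma> \<delta> (lin (a i)) (r i)) F"
  shows "(\<Sum>i\<in>I. r i) \<le> degree F"
  using assms conj_lin_prods_sum_le_degree[of I a r "\<lambda>i. skew_pow \<sigma> \<delta> (lin (a i)) (r i)" F]
  by (simp add: conj_lin_prod_skew_pow)

lemma degree_monic_llcm_skew_pows:
  assumes "finite I" "\<forall>i\<in>I. \<forall>j\<in>I. i \<noteq> j \<longrightarrow> \<not> conjugate (a i) (a j)"
    and "is_monic_llcm \<sigma> \<delta> I (\<lambda>i. skew_pow \<sigma> \<delta> (lin (a i)) (r i)) L"
  shows "degree L = (\<Sum>i\<in>I. r i)"
proof -
  obtain m where m: "m \<noteq> 0" "degree m \<le> (\<Sum>i\<in>I. r i)"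
    "\<forall>i\<in>I. rdvd (skew_pow \<sigma> \<delta> (lin (a i)) (r i)) m"
    using common_left_multiple_skew_pows[OF assms(1)] by blast
  have L: "L \<noteq> 0" "\<forall>i\<in>I. rdvd (skew_pow \<sigma> \<delta> (lin (a i)) (r i)) L" "rdvd L m"
    using assms(3) m(3) by (auto simp: is_monic_llcm_def)
  then obtain Q where "m = Q \<star> L"
    by (auto simp: right_dvd_def)
  with m(1) L(1) have "degree L \<le> degree m"
    by (cases "Q = 0") (simp_all add: degree_skew_mult)
  moreover have "(\<Sum>i\<in>I. r i) \<le> degree L"
    using sum_le_degree_common_left_multiple[OF assms(1,2) L(1,2)] .
  ultimately show ?thesis
    using m(2) by simp
qed

end

theorem mainTheorem8:
  fixes \<sigma> \<delta> :: "'a::division_ring \<Rightarrow> 'a" and n :: nat and a :: "nat \<Rightarrow> 'a"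
    and r :: "nat \<Rightarrow> nat" and F :: "'a poly"
  assumes "ring_endo \<sigma>" and "sigma_derivation \<sigma> \<delta>"
    and "\<forall>i\<in>{1..n}. \<forall>j\<in>{1..n}. i \<noteq> j \<longrightarrow> \<not> sd_conjugate \<sigma> \<delta> (a i) (a j)"
    and "\<forall>i\<in>{1..n}. r i > 0"
    and "F \<noteq> 0"
    and "\<forall>i\<in>{1..n}. right_dvd \<sigma> \<delta> (skew_pow \<sigma> \<delta> [:- a i, 1:] (r i)) F"
  shows "(\<Sum>i=1..n. r i) \<le> degree F \<and>
    (\<exists>L. is_monic_llcm \<sigma> \<delta> {1..n} (\<lambda>i. skew_pow \<sigma> \<delta> [:- a i, 1:] (r i)) L) \<and>
    (\<forall>L. is_monic_llcm \<sigma> \<delta> {1..n} (\<lambda>i. skew_pow \<sigma> \<delta> [:- a i, 1:] (r i)) L \<longrightarrow>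
       ((\<Sum>i=1..n. r i) = degree F \<longleftrightarrow> (\<exists>c. c \<noteq> 0 \<and> F = skew_mult \<sigma> \<delta> [:c:] L)))"
proof -
  interpret skew_poly_ring \<sigma> \<delta>
    using assms(1,2) by unfold_locales
  have "(\<Sum>i=1..n. r i) \<le> degree F"
    using sum_le_degree_common_left_multiple assms(3,5,6) by blast
  moreover have "\<exists>L. is_monic_llcm \<sigma> \<delta> {1..n} (\<lambda>i. skew_pow \<sigma> \<delta> (lin (a i)) (r i)) L"
    using common_left_multiple_skew_pows[of "{1..n}" r a] by (intro monic_llcm_exists) blast
  moreover have "(\<Sum>i=1..n. r i) = degree F \<longleftrightarrow> (\<exists>c. c \<noteq> 0 \<and> F = [:c:] \<star> L)"
    if "is_monic_llcm \<sigma> \<delta> {1..n} (\<lambda>i. skew_pow \<sigma> \<delta> (lin (a i)) (r i)) L" for L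
    using degree_eq_monic_llcm_iff[OF that assms(5,6)] degree_monic_llcm_skew_pows[OF _ assms(3) that]
    by auto
  ultimately show ?thesis
    by blast
qed

end
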